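(* For every two integers $m,n\ge2$ there exists a mapping $h_m^n:\mathbb Z_m^n\to\{0,\ldots,4m\}^{2n}$ such that for every $q\in[2,\infty)$ and every $x,y\in\mathbb Z_m^n$, $$m\Big(\sum_{j=1}^n\big|e^{2\pi ix_j/m}-e^{2\pi iy_j/m}\big|^q\Big)^{1/q}\le\|h_m^n(x)-h_m^n(y)\|_q\le 3m\Big(\sum_{j=1}^n\big|e^{2\pi ix_j/m}-e^{2\pi iy_j/m}\big|^q\Big)^{1/q},$$ where $\|\cdot\|_q$ is the $\ell_q$ norm on $\mathbb R^{2n}$.
   Context: $\mathbb Z_m^n=(\mathbb Z/m\mathbb Z)^n$; the expression $e^{2\pi i x_j/m}$ is well defined for $x_j\in\mathbb Z/m\mathbb Z$. *)

theory Defs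
  imports "HOL-Analysis.Analysis" "HOL-Library.FuncSet"
begin

text \<open>Z_m^n: vectors indexed by {0..<n} (the paper's 1..n) with entries in {0..<m},
  the canonical representatives of Z/mZ; extensional outside the index set.\<close>
definition Zmn :: "nat \<Rightarrow> nat \<Rightarrow> (nat \<Rightarrow> nat) set" where
  "Zmn m n = ({0..<n} \<rightarrow>\<^sub>E {0..<m})"

definition zchar :: "nat \<Rightarrow> nat \<Rightarrow> complex" where
  "zchar m k = exp (2 * pi * \<i> * of_nat k / of_nat m)"

definition lq_norm :: "real \<Rightarrow> nat \<Rightarrow> (nat \<Rightarrow> real) \<Rightarrow> real" where
  "lq_norm q d v = (\<Sum>j<d. \<bar>v j\<bar> powr q) powr (1 / q)"

definition char_dist :: "real \<Rightarrow> nat \<Rightarrow> nat \<Rightarrow> (nat \<Rightarrow> nat) \<Rightarrow> (nat \<Rightarrow> nat) \<Rightarrow> real" where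
  "char_dist q m n x y = (\<Sum>j<n. cmod (zchar m (x j) - zchar m (y j)) powr q) powr (1 / q)"

end

theory Submission
  imports Defs
begin

(*
  Scale the unit circle by 2m and round both coordinates to the nearest
  integer: a residue k of Z_m is sent to the lattice point nearest to
  2m e^{2 pi i k/m}, shifted by 2m so that both coordinates lie in {0..4m}.
  Rounding moves each coordinate by at most 1/2, so coordinate differences
  change by at most 1.  Two distinct m-th roots of unity are at distance at
  least 5/(2m), so for distinct residues the scaled chord D = m |e_x - e_y|
  is at least 5/2, and for such D an additive error of 1 in each coordinate costs at most a
  factor 3 (upper bound) and nothing (lower bound) in the l_q norm of the
  planar difference, for every q >= 2.  The map h_m^n applies this embedding
  coordinatewise; summing the planar estimates over the n coordinates gives
  the theorem.
*)


section \<open>Separation of the m-th roots of unity\<close>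

lemma sin_ge_cubic:
  fixes x :: real
  assumes "0 \<le> x"
  shows "x - x^3/6 \<le> sin x"
proof -
  have "\<bar>sin x - (\<Sum>k<3. sin_coeff k * x ^ k)\<bar> \<le> inverse (fact 3) * \<bar>x\<bar> ^ 3"
    by (rule Maclaurin_sin_bound)
  moreover have "(\<Sum>k<3. sin_coeff k * x ^ k) = x"
    by (simp add: numeral_3_eq_3 sin_coeff_def)
  moreover have "inverse (fact 3 :: real) = 1/6"
    by (simp add: numeral_3_eq_3)
  ultimately have "\<bar>sin x - x\<bar> \<le> x^3/6"
    using assms by simp
  then show ?thesis
    by linarith
qed

text \<open>On [pi/m, pi/2] the sine is at least 5/(4m): below 1 use the cubic bound,
  above 1 use monotonicity and sin 1 \<ge> 5/6.\<close>
lemma sin_lower_bound: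
  fixes m s :: real
  assumes m: "2 \<le> m" and s_lo: "pi / m \<le> s" and s_hi: "s \<le> pi / 2"
  shows "5 / (4 * m) \<le> sin s"
proof (cases "s \<le> 1")
  case True
  have three_le_s: "3 / m \<le> s"
    using pi_gt3 m s_lo by (smt (verit) divide_right_mono)
  then have s0: "0 \<le> s"
    using m by (smt (verit) divide_nonneg_nonneg)
  have "s * s \<le> 1"
    using True s0 by (simp add: mult_le_one)
  then have "s^3 \<le> s"
    using s0 by (simp add: power3_eq_cube mult.assoc mult_left_le)
  then have "5/6 * s \<le> sin s"
    using sin_ge_cubic[OF s0] by linarith
  moreover have "5 / (4 * m) \<le> 5/6 * (3 / m)"
    using m by (simp add: field_simps)
  ultimately show ?thesis
    using three_le_s by linarith
next
  case False
  have "sin 1 \<le> sin s"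
    using False s_hi pi_gt3 by (intro sin_monotone_2pi_le) auto
  moreover have "5/6 \<le> sin (1::real)"
    using sin_ge_cubic[of 1] by simp
  moreover have "5 / (4 * m) \<le> 5/8"
    using m by (simp add: field_simps)
  ultimately show ?thesis
    by linarith
qed

text \<open>For 0 < k < m the value sin(pi k/m) is at least 5/(4m); by the symmetry
  sin(pi - t) = sin t we may assume k \<le> m/2.\<close>
lemma sin_pi_frac_lower:
  fixes m k :: nat
  assumes m: "2 \<le> m" and k: "1 \<le> k" "k < m"
  shows "5 / (4 * real m) \<le> sin (pi * real k / real m)"
proof -
  have bound: "5 / (4 * real m) \<le> sin (pi * real j / real m)"
    if "1 \<le> j" "2 * j \<le> m" for j :: nat
  proof (rule sin_lower_bound)
    show "pi / real m \<le> pi * real j / real m"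
      using that m by (simp add: divide_right_mono)
    show "pi * real j / real m \<le> pi / 2"
      using that m by (simp add: field_simps)
  qed (use m in simp)
  show ?thesis
  proof (cases "2 * k \<le> m")
    case True
    then show ?thesis using bound k by simp
  next
    case False
    have "pi * real k / real m = pi - pi * real (m - k) / real m"
      using k m by (simp add: of_nat_diff field_simps)
    then show ?thesis
      using bound[of "m - k"] False k by simp
  qed
qed

lemma dist_exp_i:
  fixes a b :: real
  shows "cmod (exp (\<i> * of_real a) - exp (\<i> * of_real b)) = 2 * \<bar>sin ((a - b) / 2)\<bar>"
proof -
  have "exp (\<i> * of_real a) - exp (\<i> * of_real b)
      = exp (\<i> * of_real b) * (exp (\<i> * of_real (a - b)) - 1)"
    by (simp add: algebra_simps flip: exp_add)
  then have "cmod (exp (\<i> * of_real a) - exp (\<i> * of_real b)) = cmod (exp (\<i> * of_real (a - b)) - 1)"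
    by (simp only: norm_mult norm_exp_i_times mult_1)
  then show ?thesis
    by (simp only: dist_exp_i_1)
qed

lemma zchar_dist:
  "cmod (zchar m a - zchar m b) = 2 * \<bar>sin (pi * (real a - real b) / real m)\<bar>"
proof -
  have "zchar m k = exp (\<i> * of_real (2 * pi * real k / real m))" for k
    by (simp add: zchar_def mult_ac)
  moreover have "(2 * pi * real a / real m - 2 * pi * real b / real m) / 2 = pi * (real a - real b) / real m"
    by (simp add: diff_divide_distrib right_diff_distrib)
  ultimately show ?thesis
    by (simp only: dist_exp_i)
qed

lemma zchar_separated:
  fixes m a b :: nat
  assumes m: "2 \<le> m" and ab: "a < m" "b < m" "a \<noteq> b"
  shows "5/2 \<le> real m * cmod (zchar m a - zchar m b)"
proof -
  have lower: "5/2 \<le> real m * cmod (zchar m a - zchar m b)"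
    if "b < a" "a < m" for a b
  proof -
    have "5 / (4 * real m) \<le> sin (pi * real (a - b) / real m)"
      using that m by (intro sin_pi_frac_lower) auto
    also have "\<dots> = sin (pi * (real a - real b) / real m)"
      using that by (simp add: of_nat_diff)
    finally have "5 / (2 * real m) \<le> cmod (zchar m a - zchar m b)"
      unfolding zchar_dist by simp
    then show ?thesis
      using m by (simp add: field_simps)
  qed
  show ?thesis
  proof (cases "b < a")
    case True
    then show ?thesis using lower ab by simp
  next
    case False
    then show ?thesis using lower[of a b] ab by (simp add: norm_minus_commute)
  qed
qed


section \<open>The planar distortion estimate\<close>

lemma powr_sum_le_l2:
  fixes u w q :: real
  assumes q: "2 \<le> q" and u: "0 \<le> u" and w: "0 \<le> w"
  shows "u powr q + w powr q \<le> sqrt (u^2 + w^2) powr q"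
proof (cases "u^2 + w^2 = 0")
  case True
  then have "u = 0" "w = 0"
    using u w by (auto simp: add_nonneg_eq_0_iff)
  then show ?thesis by simp
next
  case False
  define s where "s = sqrt (u^2 + w^2)"
  have s_pos: "0 < s"
    using False unfolding s_def by (simp add: add_nonneg_nonneg add_pos_nonneg sum_power2_gt_zero_iff)
  have s_sq: "s^2 = u^2 + w^2"
    unfolding s_def by simp
  text \<open>Each coordinate is at most s, so its q-th power is at most s^q (x/s)^2.\<close>
  have coord: "x powr q \<le> s powr q * (x/s)^2" if "0 \<le> x" "x \<le> s" for x
  proof -
    have "x powr q = s powr q * (x/s) powr q"
      using s_pos that by (simp add: powr_divide)
    also have "(x/s) powr q \<le> (x/s) powr 2"
      using q that s_pos by (intro powr_mono') (auto simp: divide_le_eq_1)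
    also have "(x/s) powr 2 = (x/s)^2"
      using that s_pos by (simp add: powr_numeral)
    finally show ?thesis
      by (simp add: mult_left_mono)
  qed
  have "u \<le> s" "w \<le> s"
    unfolding s_def using u w by (auto intro: real_le_rsqrt)
  then have "u powr q + w powr q \<le> s powr q * ((u^2 + w^2) / s^2)"
    using coord[OF u] coord[OF w] by (simp add: power_divide add_divide_distrib distrib_left)
  also have "\<dots> = s powr q"
    using s_pos by (simp flip: s_sq)
  finally show ?thesis
    unfolding s_def .
qed

lemma rounded_pair_distortion:
  fixes q D al be u w :: real
  assumes q: "2 \<le> q" and circ: "al^2 + be^2 = (2 * D)^2"
    and u: "0 \<le> u" and w: "0 \<le> w"
    and u_close: "\<bar>u - \<bar>al\<bar>\<bar> \<le> 1" and w_close: "\<bar>w - \<bar>be\<bar>\<bar> \<le> 1"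
    and cases: "(D = 0 \<and> u = 0 \<and> w = 0) \<or> 5/2 \<le> D"
  shows "D powr q \<le> u powr q + w powr q \<and> u powr q + w powr q \<le> (3 * D) powr q"
  using cases
proof
  assume "5/2 \<le> D"
  then have D: "0 \<le> D" "5/2 * D \<le> D * D"
    by (auto intro: mult_right_mono)
  text \<open>The larger of |al|, |be| is at least sqrt 2 D \<ge> D + 1.\<close>
  have large: "D + 1 \<le> \<bar>t\<bar>" if "2 * D^2 \<le> t^2" for t :: real
  proof -
    have "(D + 1)^2 = D * D + 2 * D + 1" "2 * D^2 = 2 * (D * D)"
      by (simp_all add: power2_eq_square algebra_simps)
    then have "(D + 1)^2 \<le> 2 * D^2"
      using D \<open>5/2 \<le> D\<close> by linarith
    then have "(D + 1)^2 \<le> \<bar>t\<bar>^2"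
      using that by simp
    then show ?thesis
      by (rule power2_le_imp_le) simp
  qed
  have "D \<le> u \<or> D \<le> w"
  proof (cases "2 * D^2 \<le> al^2")
    case True
    then show ?thesis using large u_close by fastforce
  next
    case False
    then have "2 * D^2 \<le> be^2"
      using circ by (simp add: power_mult_distrib)
    then show ?thesis using large w_close by fastforce
  qed
  then have lower: "D powr q \<le> u powr q + w powr q"
    using D q by (smt (verit) powr_ge_zero powr_mono2)
  have small: "\<bar>t\<bar> \<le> 2 * D" if "t^2 \<le> (2 * D)^2" for t :: real
  proof (rule power2_le_imp_le)
    show "\<bar>t\<bar>^2 \<le> (2 * D)^2"
      using that by (simp only: power2_abs)
  qed (use D(1) in simp)
  have "al^2 \<le> (2 * D)^2" "be^2 \<le> (2 * D)^2"
    using circ zero_le_power2[of al] zero_le_power2[of be] by linarith+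
  then have al_be: "\<bar>al\<bar> \<le> 2 * D" "\<bar>be\<bar> \<le> 2 * D"
    by (simp_all only: small)
  have "u^2 + w^2 \<le> (\<bar>al\<bar> + 1)^2 + (\<bar>be\<bar> + 1)^2"
    using u w u_close w_close by (intro add_mono power_mono) auto
  also have "\<dots> = al^2 + be^2 + 2 * (\<bar>al\<bar> + \<bar>be\<bar>) + 2"
    by (simp add: power2_eq_square algebra_simps)
  also have "\<dots> \<le> 4 * D^2 + 8 * D + 2"
    using circ al_be by (simp add: power_mult_distrib)
  also have "\<dots> \<le> (3 * D)^2"
  proof -
    have "(3 * D)^2 = 9 * (D * D)" "D^2 = D * D"
      by (simp_all add: power2_eq_square)
    then show ?thesis
      using D \<open>5/2 \<le> D\<close> by linarith
  qed
  finally have "sqrt (u^2 + w^2) \<le> 3 * D"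
    using D by (simp add: real_sqrt_le_iff real_le_lsqrt)
  then have "sqrt (u^2 + w^2) powr q \<le> (3 * D) powr q"
    using q by (intro powr_mono2) auto
  then have "u powr q + w powr q \<le> (3 * D) powr q"
    using powr_sum_le_l2[OF q u w] by linarith
  with lower show ?thesis ..
qed simp


section \<open>Rounding the scaled circle to the integer grid\<close>

definition scaled_char :: "nat \<Rightarrow> nat \<Rightarrow> complex" where
  "scaled_char m k = of_nat (2 * m) * zchar m k"

definition shift_round :: "nat \<Rightarrow> real \<Rightarrow> nat" where
  "shift_round m t = nat (round t + 2 * int m)"

definition grid_embed :: "nat \<Rightarrow> nat \<Rightarrow> (nat \<Rightarrow> nat) \<Rightarrow> (nat \<Rightarrow> nat)" where
  "grid_embed m n x = (\<lambda>i. if i < 2 * n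
     then shift_round m ((if even i then Re else Im) (scaled_char m (x (i div 2))))
     else undefined)"

lemma scaled_char_coords:
  "\<bar>Re (scaled_char m k)\<bar> \<le> 2 * real m" "\<bar>Im (scaled_char m k)\<bar> \<le> 2 * real m"
proof -
  have "cmod (zchar m k) = 1"
    using norm_exp_i_times[of "2 * pi * real k / real m"] by (simp add: zchar_def mult_ac)
  then have "cmod (scaled_char m k) = 2 * real m"
    by (simp add: scaled_char_def norm_mult)
  then show "\<bar>Re (scaled_char m k)\<bar> \<le> 2 * real m" "\<bar>Im (scaled_char m k)\<bar> \<le> 2 * real m"
    using abs_Re_le_cmod abs_Im_le_cmod by metis+
qed

lemma shift_round_bounds:
  assumes "\<bar>t\<bar> \<le> 2 * real m"
  shows "shift_round m t \<le> 4 * m" "real (shift_round m t) = of_int (round t) + 2 * real m"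
proof -
  have "\<bar>of_int (round t) - t\<bar> \<le> (1/2 :: real)"
    by (rule of_int_round_abs_le)
  then have "of_int (round t) < 2 * real m + 1" "- 2 * real m - 1 < (of_int (round t) :: real)"
    using assms by linarith+
  then have "round t \<le> 2 * int m" "- 2 * int m \<le> round t"
    by linarith+
  then show "shift_round m t \<le> 4 * m" "real (shift_round m t) = of_int (round t) + 2 * real m"
    unfolding shift_round_def by auto
qed

lemma shift_round_diff:
  assumes "\<bar>t\<bar> \<le> 2 * real m" "\<bar>t'\<bar> \<le> 2 * real m"
  shows "\<bar>\<bar>real (shift_round m t) - real (shift_round m t')\<bar> - \<bar>t - t'\<bar>\<bar> \<le> 1"
  using of_int_round_abs_le[of t] of_int_round_abs_le[of t']
    shift_round_bounds(2)[OF assms(1)] shift_round_bounds(2)[OF assms(2)]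
  by linarith

lemma grid_embed_range: "grid_embed m n \<in> Zmn m n \<rightarrow> ({0..<2 * n} \<rightarrow>\<^sub>E {0..4 * m})"
  by (auto simp: grid_embed_def PiE_def extensional_def shift_round_bounds(1) scaled_char_coords)

lemma scaled_char_diff:
  "(Re (scaled_char m a) - Re (scaled_char m b))^2 + (Im (scaled_char m a) - Im (scaled_char m b))^2
     = (2 * (real m * cmod (zchar m a - zchar m b)))^2"
proof -
  have "scaled_char m a - scaled_char m b = of_nat (2 * m) * (zchar m a - zchar m b)"
    by (simp add: scaled_char_def algebra_simps)
  then have "cmod (scaled_char m a - scaled_char m b) = 2 * (real m * cmod (zchar m a - zchar m b))"
    by (simp add: norm_mult)
  then show ?thesis
    by (metis cmod_power2 minus_complex.simps)
qed

lemma grid_embed_coordinate: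
  fixes m a b :: nat and q :: real
  assumes m: "2 \<le> m" and ab: "a < m" "b < m" and q: "2 \<le> q"
  defines "D \<equiv> real m * cmod (zchar m a - zchar m b)"
    and "u \<equiv> \<bar>real (shift_round m (Re (scaled_char m a))) - real (shift_round m (Re (scaled_char m b)))\<bar>"
    and "w \<equiv> \<bar>real (shift_round m (Im (scaled_char m a))) - real (shift_round m (Im (scaled_char m b)))\<bar>"
  shows "D powr q \<le> u powr q + w powr q \<and> u powr q + w powr q \<le> (3 * D) powr q"
proof (rule rounded_pair_distortion[OF q scaled_char_diff[of m a b, folded D_def]])
  show "0 \<le> u" "0 \<le> w"
    unfolding u_def w_def by simp_all
  show "\<bar>u - \<bar>Re (scaled_char m a) - Re (scaled_char m b)\<bar>\<bar> \<le> 1"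
    "\<bar>w - \<bar>Im (scaled_char m a) - Im (scaled_char m b)\<bar>\<bar> \<le> 1"
    unfolding u_def w_def by (intro shift_round_diff scaled_char_coords)+
  show "D = 0 \<and> u = 0 \<and> w = 0 \<or> 5/2 \<le> D"
    using zchar_separated[OF m ab] unfolding D_def u_def w_def by (cases "a = b") auto
qed


lemma lq_norm_pairs:
  "lq_norm q (2 * n) v = (\<Sum>j<n. \<bar>v (2 * j)\<bar> powr q + \<bar>v (2 * j + 1)\<bar> powr q) powr (1 / q)"
proof -
  have "(\<Sum>i<2 * n. f i) = (\<Sum>j<n. f (2 * j) + f (2 * j + 1))" for f :: "nat \<Rightarrow> real"
    by (induction n) (simp_all add: algebra_simps)
  then show ?thesis
    unfolding lq_norm_def by simp
qed

lemma powr_sum_scale: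
  fixes c q :: real and f :: "nat \<Rightarrow> real"
  assumes c: "0 \<le> c" and q: "0 < q" and f: "\<And>j. 0 \<le> f j"
  shows "c * (\<Sum>j<n. f j powr q) powr (1/q) = (\<Sum>j<n. (c * f j) powr q) powr (1/q)"
proof -
  have "(\<Sum>j<n. (c * f j) powr q) = c powr q * (\<Sum>j<n. f j powr q)"
    using c f by (simp add: powr_mult sum_distrib_left)
  then have "(\<Sum>j<n. (c * f j) powr q) powr (1/q) = (c powr q) powr (1/q) * (\<Sum>j<n. f j powr q) powr (1/q)"
    using c by (simp add: powr_mult sum_nonneg)
  also have "(c powr q) powr (1/q) = c"
    using c q by (simp add: powr_powr)
  finally show ?thesis by simp
qed

lemma lq_sandwich:
  fixes c q :: real and f T :: "nat \<Rightarrow> real"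
  assumes c: "0 \<le> c" and q: "0 < q" and f: "\<And>j. 0 \<le> f j"
    and T: "\<And>j. j < n \<Longrightarrow> f j powr q \<le> T j \<and> T j \<le> (c * f j) powr q"
  shows "(\<Sum>j<n. f j powr q) powr (1/q) \<le> (\<Sum>j<n. T j) powr (1/q)"
    and "(\<Sum>j<n. T j) powr (1/q) \<le> c * (\<Sum>j<n. f j powr q) powr (1/q)"
proof -
  have "(\<Sum>j<n. f j powr q) \<le> (\<Sum>j<n. T j)"
    using T by (intro sum_mono) auto
  then show "(\<Sum>j<n. f j powr q) powr (1/q) \<le> (\<Sum>j<n. T j) powr (1/q)"
    using q by (intro powr_mono2) (auto intro: sum_nonneg)
  have "(\<Sum>j<n. T j) \<le> (\<Sum>j<n. (c * f j) powr q)"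
    using T by (intro sum_mono) auto
  moreover have "0 \<le> (\<Sum>j<n. T j)"
    using T by (intro sum_nonneg) (meson lessThan_iff order_trans powr_ge_zero)
  ultimately have "(\<Sum>j<n. T j) powr (1/q) \<le> (\<Sum>j<n. (c * f j) powr q) powr (1/q)"
    using q by (intro powr_mono2) auto
  then show "(\<Sum>j<n. T j) powr (1/q) \<le> c * (\<Sum>j<n. f j powr q) powr (1/q)"
    using powr_sum_scale[OF c q f] by simp
qed


theorem mainTheorem7:
  fixes m n :: nat
  assumes "m \<ge> 2" and "n \<ge> 2"
  shows "\<exists>h :: (nat \<Rightarrow> nat) \<Rightarrow> (nat \<Rightarrow> nat).
           h \<in> Zmn m n \<rightarrow> ({0..<2 * n} \<rightarrow>\<^sub>E {0..4 * m}) \<and>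
           (\<forall>q :: real. q \<ge> 2 \<longrightarrow> (\<forall>x \<in> Zmn m n. \<forall>y \<in> Zmn m n.
              real m * char_dist q m n x y
                \<le> lq_norm q (2 * n) (\<lambda>j. real (h x j) - real (h y j)) \<and>
              lq_norm q (2 * n) (\<lambda>j. real (h x j) - real (h y j))
                \<le> 3 * real m * char_dist q m n x y))"
proof (intro exI[of _ "grid_embed m n"] conjI allI impI ballI grid_embed_range)
  fix q :: real and x y
  assume q: "2 \<le> q" and x: "x \<in> Zmn m n" and y: "y \<in> Zmn m n"
  define D where "D j = real m * cmod (zchar m (x j) - zchar m (y j))" for j
  define h where "h = (\<lambda>j. real (grid_embed m n x j) - real (grid_embed m n y j))"
  have bounds: "D j powr q \<le> \<bar>h (2 * j)\<bar> powr q + \<bar>h (2 * j + 1)\<bar> powr q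
      \<and> \<bar>h (2 * j)\<bar> powr q + \<bar>h (2 * j + 1)\<bar> powr q \<le> (3 * D j) powr q" if "j < n" for j
  proof -
    have "x j < m" "y j < m"
      using x y that by (auto simp: Zmn_def)
    then show ?thesis
      using grid_embed_coordinate[OF assms(1) _ _ q] that
      unfolding D_def h_def grid_embed_def by simp
  qed
  have "real m * char_dist q m n x y = (\<Sum>j<n. D j powr q) powr (1/q)"
    unfolding char_dist_def D_def using q by (intro powr_sum_scale) auto
  then show "real m * char_dist q m n x y \<le> lq_norm q (2 * n) h"
    and "lq_norm q (2 * n) h \<le> 3 * real m * char_dist q m n x y"
    unfolding lq_norm_pairs using lq_sandwich[of 3 q D n, OF _ _ _ bounds] q
    by (simp_all add: D_def)
qed

end
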